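(* Let lines in the real projective plane be in bounded general position, with associated graph $G$. Let $V$ be a convex $m$-polygon whose vertices are vertices of $G$ and whose sides lie on distinct lines of the arrangement, suppose $V$ is not an alcove and has vertex number $k>0$, and suppose an edge $e$ of $G$ forms one side of $V$. Then $e$ forms one side of a convex polygon $W$ with at most $m+1$ sides, whose vertices are vertices of $G$ and whose sides lie on distinct lines of the arrangement, having vertex number $r$ with $0\leq r<k$.
   Context: Lines in $\mathbb{R}P^2$ are in general position if no three pass through a common point, and in bounded position if all pairwise intersections lie in $\mathbb{R}^2$. The graph $G$ has as vertices the pairwise intersection points of the lines; two vertices are joined by an edge if some line of the arrangement contains both and no third vertex lies between them on that line; the edge is the closed segment joining them. An alcove is a subset $V\subset\mathbb{R}^2$ which is compact, convex and connected, whose boundary is a union of edges of $G$ belonging to distinct lines, and which contains no proper subset with these two properties. For a convex polygon $V$ whose vertices are vertices of $G$ lying on distinct lines, its vertex number is the number of vertices of $G$ lying either in the interior of $V$ or in the interior of one of the line segments forming the boundary of $V$. *)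

theory Defs
  imports "HOL-Analysis.Analysis"
begin

text \<open>Lines of an arrangement in bounded position are modelled as affine lines of the
  real plane (all pairwise intersections are finite, so the line at infinity is excluded
  and no two lines are parallel).\<close>

definition is_line :: "(real^2) set \<Rightarrow> bool" where
  "is_line L \<longleftrightarrow> (\<exists>a b. a \<noteq> 0 \<and> L = {x. a \<bullet> x = b})"

definition bounded_general_position :: "(real^2) set set \<Rightarrow> bool" where
  "bounded_general_position \<L> \<longleftrightarrow>
     finite \<L> \<and> (\<forall>L\<in>\<L>. is_line L) \<and>
     (\<forall>L1\<in>\<L>. \<forall>L2\<in>\<L>. L1 \<noteq> L2 \<longrightarrow> L1 \<inter> L2 \<noteq> {}) \<and>
     (\<forall>L1\<in>\<L>. \<forall>L2\<in>\<L>. \<forall>L3\<in>\<L>. L1 \<noteq> L2 \<and> L1 \<noteq> L3 \<and> L2 \<noteq> L3 \<longrightarrow> L1 \<inter> L2 \<inter> L3 = {})"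

definition G_vertices :: "(real^2) set set \<Rightarrow> (real^2) set" where
  "G_vertices \<L> = {p. \<exists>L1\<in>\<L>. \<exists>L2\<in>\<L>. L1 \<noteq> L2 \<and> p \<in> L1 \<and> p \<in> L2}"

definition G_edges :: "(real^2) set set \<Rightarrow> (real^2) set set" where
  "G_edges \<L> = {closed_segment p q | p q.
       p \<in> G_vertices \<L> \<and> q \<in> G_vertices \<L> \<and> p \<noteq> q \<and>
       (\<exists>L\<in>\<L>. p \<in> L \<and> q \<in> L) \<and>
       G_vertices \<L> \<inter> open_segment p q = {}}"

definition polygon_sides :: "(real^2) set \<Rightarrow> (real^2) set set" where
  "polygon_sides V = {F. F face_of V \<and> aff_dim F = 1}"

definition polygon_vertices :: "(real^2) set \<Rightarrow> (real^2) set" where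
  "polygon_vertices V = {x. {x} face_of V}"

definition arr_polygon :: "(real^2) set set \<Rightarrow> (real^2) set \<Rightarrow> bool" where
  "arr_polygon \<L> V \<longleftrightarrow>
     polytope V \<and> aff_dim V = 2 \<and>
     polygon_vertices V \<subseteq> G_vertices \<L> \<and>
     (\<exists>lf. inj_on lf (polygon_sides V) \<and>
          (\<forall>F\<in>polygon_sides V. lf F \<in> \<L> \<and> F \<subseteq> lf F))"

definition vertex_number :: "(real^2) set set \<Rightarrow> (real^2) set \<Rightarrow> nat" where
  "vertex_number \<L> V = card {p \<in> G_vertices \<L>.
       p \<in> interior V \<or> (\<exists>F\<in>polygon_sides V. p \<in> rel_interior F)}"

text \<open>The two properties in the definition of an alcove (nondegeneracy: nonempty interior).\<close>
definition alcove_candidate :: "(real^2) set set \<Rightarrow> (real^2) set \<Rightarrow> bool" where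
  "alcove_candidate \<L> V \<longleftrightarrow>
     compact V \<and> convex V \<and> connected V \<and> interior V \<noteq> {} \<and>
     (\<exists>E. E \<subseteq> G_edges \<L> \<and> frontier V = \<Union>E \<and>
          (\<exists>lf. inj_on lf E \<and> (\<forall>e\<in>E. lf e \<in> \<L> \<and> e \<subseteq> lf e)))"

definition alcove :: "(real^2) set set \<Rightarrow> (real^2) set \<Rightarrow> bool" where
  "alcove \<L> V \<longleftrightarrow> alcove_candidate \<L> V \<and> \<not> (\<exists>U. U \<subset> V \<and> alcove_candidate \<L> U)"

end

theory Submission
  imports Defs
begin

text \<open>Since \<open>k > 0\<close>, some vertex of \<open>G\<close> lies in the interior of \<open>V\<close> or in the relative
  interior of one of its sides; in either case one of the two lines through it crosses the interior
  of \<open>V\<close>. Such a crossing line \<open>l\<close> misses the side \<open>e\<close>: a common point would be a vertex of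
  \<open>G\<close> on the edge \<open>e\<close>, hence an endpoint of \<open>e\<close> and a corner of \<open>V\<close>, through which three lines
  of the arrangement would pass. Cutting \<open>V\<close> along \<open>l\<close> and keeping the half-plane containing
  \<open>e\<close> gives \<open>W\<close>. Every side of \<open>W\<close> lies on \<open>l\<close> or inside a side of \<open>V\<close>, so \<open>W\<close> has at
  most \<open>m + 1\<close> sides, and every vertex of \<open>G\<close> counted for \<open>W\<close> is counted for \<open>V\<close>. Where
  \<open>l\<close> leaves \<open>V\<close> it meets the relative interior of a side (general position again excludes the
  corners) in a vertex of \<open>G\<close> that is counted for \<open>V\<close> but not for \<open>W\<close>.\<close>

section \<open>Lines\<close>

lemma is_line_hyperplane: "a \<noteq> 0 \<Longrightarrow> is_line {x. a \<bullet> x = b}"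
  unfolding is_line_def by blast

lemma affine_line: "is_line L \<Longrightarrow> affine L"
  unfolding is_line_def by (auto simp: affine_hyperplane)

lemma aff_dim_line: "is_line L \<Longrightarrow> aff_dim L = 1"
  unfolding is_line_def by auto

lemma not_bounded_line:
  assumes "is_line L"
  shows "\<not> bounded L"
proof
  assume "bounded L"
  then have "L = {} \<or> (\<exists>a. L = {a})" using affine_bounded_eq_trivial[OF affine_line[OF assms]] by blast
  then show False using aff_dim_line[OF assms] by auto
qed

lemma affine_hull_eq_line:
  assumes "is_line L" "F \<subseteq> L" "aff_dim F = 1"
  shows "affine hull F = L"
proof (rule affine_dim_equal)
  show "affine hull F \<noteq> {}" using assms(3) by auto
  show "affine hull F \<subseteq> L" using assms by (simp add: affine_line hull_minimal)
qed (use assms aff_dim_line affine_line in auto)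

lemma lines_meet_at_most_once:
  assumes "is_line L1" "is_line L2" "L1 \<noteq> L2" "x \<in> L1 \<inter> L2" "y \<in> L1 \<inter> L2"
  shows "x = y"
proof (rule ccontr)
  assume "x \<noteq> y"
  then have "aff_dim {x, y} = 1" by simp
  then show False
    using affine_hull_eq_line[of L1 "{x, y}"] affine_hull_eq_line[of L2 "{x, y}"] assms by auto
qed

section \<open>Convex polygons\<close>

lemma subset_supporting_hyperplane_rel_interior:
  fixes G :: "'a::euclidean_space set"
  assumes "convex G" "G \<subseteq> {x. a \<bullet> x \<le> b}" "x \<in> rel_interior G" "a \<bullet> x = b"
  shows "G \<subseteq> {x. a \<bullet> x = b}"
proof -
  have "(G \<inter> {x. a \<bullet> x = b}) face_of G"
    using assms by (intro face_of_Int_supporting_hyperplane_le) auto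
  moreover have "(G \<inter> {x. a \<bullet> x = b}) \<inter> rel_interior G \<noteq> {}"
    using assms rel_interior_subset by fastforce
  ultimately show ?thesis using subset_of_face_of by blast
qed

lemma affine_hull_eq_supporting_line:
  fixes G :: "(real^2) set"
  assumes "convex G" "aff_dim G = 1" "a \<noteq> 0" "G \<subseteq> {x. a \<bullet> x \<le> b}"
    "x \<in> rel_interior G" "a \<bullet> x = b"
  shows "affine hull G = {x. a \<bullet> x = b}"
proof (rule affine_hull_eq_line[OF is_line_hyperplane[OF assms(3)] _ assms(2)])
  show "G \<subseteq> {x. a \<bullet> x = b}" by (rule subset_supporting_hyperplane_rel_interior[OF assms(1,4,5,6)])
qed

lemma connected_disjoint_line_in_halfplane:
  fixes S :: "(real^2) set"
  assumes "connected S" "is_line l" "S \<inter> l = {}"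
  obtains a b where "a \<noteq> 0" "l = {x. a \<bullet> x = b}" "\<forall>x\<in>S. a \<bullet> x < b"
proof -
  obtain u c where u: "u \<noteq> 0" and l: "l = {x. u \<bullet> x = c}" using assms(2) is_line_def by blast
  have off_l: "u \<bullet> x \<noteq> c" if "x \<in> S" for x using that assms(3) l by blast
  have same_side: "u \<bullet> y < c" if xy: "x \<in> S" "y \<in> S" and le: "u \<bullet> x \<le> c" for x y
  proof (rule ccontr)
    assume "\<not> u \<bullet> y < c"
    then obtain z where "z \<in> S" "u \<bullet> z = c"
      using connected_ivt_hyperplane[OF assms(1) xy le] by force
    then show False using off_l by blast
  qed
  show ?thesis
  proof (cases "\<exists>x\<in>S. u \<bullet> x \<le> c")
    case True
    then show ?thesis using that[OF u l] same_side by blast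
  next
    case False
    then have "\<forall>x\<in>S. (-u) \<bullet> x < -c" by auto
    moreover have "l = {x. (-u) \<bullet> x = -c}" using l by auto
    ultimately show ?thesis using that u by (metis neg_equal_0_iff_equal)
  qed
qed

lemma inj_on_affine_hull_sides:
  fixes S :: "(real^2) set"
  assumes "convex S"
  shows "inj_on (\<lambda>F. affine hull F) (polygon_sides S)"
proof (rule inj_onI)
  fix F G assume sides: "F \<in> polygon_sides S" "G \<in> polygon_sides S"
    and hulls: "affine hull F = affine hull G"
  have "F face_of S" "G face_of S" using sides by (auto simp: polygon_sides_def)
  then have "F = affine hull F \<inter> S" "G = affine hull G \<inter> S"
    using face_of_imp_eq_affine_Int[OF assms] by blast+
  then show "F = G" using hulls by metis
qed

lemma polygon_sides_iff_facet:
  fixes S :: "(real^2) set"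
  assumes "aff_dim S = 2"
  shows "F \<in> polygon_sides S \<longleftrightarrow> F facet_of S"
  using assms unfolding polygon_sides_def facet_of_def by auto

lemma interior_nonempty_polygon:
  fixes S :: "(real^2) set"
  assumes "convex S" "aff_dim S = 2"
  shows "interior S \<noteq> {}"
proof -
  have "S \<noteq> {}" using assms(2) by auto
  then have "rel_interior S \<noteq> {}" by (simp add: rel_interior_eq_empty assms(1))
  then show ?thesis using interior_rel_interior_gen[of S] assms(2) by simp
qed

lemma polygon_side_supporting_line:
  fixes S :: "(real^2) set"
  assumes "polyhedron S" "aff_dim S = 2" "F \<in> polygon_sides S"
  obtains a b where "a \<noteq> 0" "S \<subseteq> {x. a \<bullet> x \<le> b}" "affine hull F = {x. a \<bullet> x = b}"
proof -
  have "F facet_of S" using assms(3) polygon_sides_iff_facet[OF assms(2)] by simp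
  then obtain a b where ab: "a \<noteq> 0" "S \<subseteq> {x. a \<bullet> x \<le> b}" "F = S \<inter> {x. a \<bullet> x = b}"
    using facet_of_polyhedron[OF assms(1)] by metis
  have "aff_dim F = 1" using assms(3) by (simp add: polygon_sides_def)
  moreover have "F \<subseteq> {x. a \<bullet> x = b}" using ab(3) by blast
  ultimately have "affine hull F = {x. a \<bullet> x = b}"
    using affine_hull_eq_line[OF is_line_hyperplane[OF ab(1)]] by simp
  then show ?thesis using that ab(1,2) by blast
qed

lemma affine_hull_side_disjoint_interior:
  fixes S :: "(real^2) set"
  assumes "convex S" "aff_dim S = 2" "F \<in> polygon_sides S"
  shows "affine hull F \<inter> interior S = {}"
proof -
  have "F face_of S" "aff_dim F = 1" using assms(3) by (auto simp: polygon_sides_def)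
  then have "F \<noteq> S" using assms(2) by auto
  then have "affine hull F \<inter> rel_interior S = {}"
    using affine_hull_face_of_disjoint_rel_interior[OF assms(1) \<open>F face_of S\<close>] by simp
  then show ?thesis using interior_subset_rel_interior by fastforce
qed

lemma frontier_polygon_in_side:
  fixes S :: "(real^2) set"
  assumes "polytope S" "aff_dim S = 2" "x \<in> frontier S"
  obtains F where "F \<in> polygon_sides S" "x \<in> F"
proof -
  have "interior S \<noteq> {}"
    using interior_nonempty_polygon[OF polytope_imp_convex[OF assms(1)] assms(2)] .
  then have "x \<in> rel_frontier S" using assms(3) rel_frontier_nonempty_interior by blast
  then have "x \<in> \<Union>{F. F facet_of S}"
    by (simp add: rel_frontier_of_polyhedron[OF polytope_imp_polyhedron[OF assms(1)]])
  then show ?thesis using that polygon_sides_iff_facet[OF assms(2)] by blast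
qed

lemma side_endpoint_is_vertex:
  fixes S :: "(real^2) set"
  assumes "polytope S" "F \<in> polygon_sides S" "x \<in> F" "x \<notin> rel_interior F"
  shows "{x} face_of S"
proof -
  have F: "F face_of S" "aff_dim F = 1" using assms(2) by (auto simp: polygon_sides_def)
  have polF: "polytope F" using face_of_polytope_polytope[OF assms(1) F(1)] .
  have "closure F = F" using polytope_imp_closed[OF polF] by simp
  then have "x \<in> rel_frontier F" using assms(3,4) by (simp add: rel_frontier_def)
  then obtain T where T: "T facet_of F" "x \<in> T"
    by (auto simp: rel_frontier_of_polyhedron[OF polytope_imp_polyhedron[OF polF]])
  have "aff_dim T = 0" using T(1) F(2) by (simp add: facet_of_def)
  then have "T = {x}" using T(2) aff_dim_eq_0[of T] by auto
  moreover have "T face_of F" using T(1) by (simp add: facet_of_def)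
  ultimately show ?thesis using face_of_trans[OF _ F(1)] by simp
qed

lemma polygon_vertex_in_two_sides:
  fixes S :: "(real^2) set"
  assumes "polyhedron S" "aff_dim S = 2" "{x} face_of S"
  obtains F F' where "F \<in> polygon_sides S" "F' \<in> polygon_sides S" "F \<noteq> F'" "x \<in> F" "x \<in> F'"
proof -
  have "{x} \<noteq> S" using assms(2) by auto
  then obtain F where F: "F facet_of S" "x \<in> F"
    using face_of_polyhedron_subset_facet[OF assms(1,3)] by blast
  have "{x} = \<Inter>{G. G facet_of S \<and> {x} \<subseteq> G}"
    using face_of_polyhedron[OF assms(1,3)] \<open>{x} \<noteq> S\<close> by blast
  moreover have "{x} \<noteq> F" using F(1) by (auto simp: facet_of_def assms(2))
  ultimately obtain F' where "F' facet_of S" "F' \<noteq> F" "x \<in> F'"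
    using F by auto
  then show ?thesis using that[of F F'] F polygon_sides_iff_facet[OF assms(2)] by simp
qed

lemma face_in_side_through_frontier_point:
  fixes V W G :: "(real^2) set"
  assumes "polytope V" "aff_dim V = 2" "W \<subseteq> V" "G face_of W" "aff_dim G = 1"
    "x \<in> rel_interior G" "x \<in> frontier V"
  obtains F where "F \<in> polygon_sides V" "G \<subseteq> F" "affine hull G = affine hull F"
proof -
  have GV: "G \<subseteq> V" using face_of_imp_subset[OF assms(4)] assms(3) by blast
  obtain F where F: "F \<in> polygon_sides V" "x \<in> F" by (rule frontier_polygon_in_side[OF assms(1,2,7)])
  obtain a b where ab: "a \<noteq> 0" "V \<subseteq> {x. a \<bullet> x \<le> b}" "affine hull F = {x. a \<bullet> x = b}"
    using polygon_side_supporting_line[OF polytope_imp_polyhedron[OF assms(1)] assms(2) F(1)] .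
  have "x \<in> affine hull F" using F(2) by (rule hull_inc)
  then have "a \<bullet> x = b" using ab(3) by simp
  moreover have "G \<subseteq> {x. a \<bullet> x \<le> b}" using GV ab(2) by blast
  ultimately have "affine hull G = {x. a \<bullet> x = b}"
    using affine_hull_eq_supporting_line[OF face_of_imp_convex[OF assms(4)] assms(5) ab(1) _ assms(6)]
    by blast
  then have hulls: "affine hull G = affine hull F" using ab(3) by simp
  have "F face_of V" using F(1) by (simp add: polygon_sides_def)
  have "G \<subseteq> affine hull G" by (rule hull_subset)
  then have "G \<subseteq> affine hull F \<inter> V" using hulls GV by auto
  also have "\<dots> = F" by (rule face_of_imp_eq_affine_Int[OF _ \<open>F face_of V\<close>, symmetric])
    (rule polytope_imp_convex[OF assms(1)])
  finally show ?thesis using that F(1) hulls by blast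
qed

section \<open>Polygons of an arrangement\<close>

lemma bounded_general_position_lines:
  assumes "bounded_general_position \<L>" "L \<in> \<L>"
  shows "is_line L"
proof -
  have "\<forall>L\<in>\<L>. is_line L"
    using assms(1) unfolding bounded_general_position_def by (elim conjE) assumption
  then show ?thesis using assms(2) ..
qed

lemma bounded_general_position_no_triple_point:
  assumes "bounded_general_position \<L>" "L1 \<in> \<L>" "L2 \<in> \<L>" "L3 \<in> \<L>"
    "L1 \<noteq> L2" "L1 \<noteq> L3" "L2 \<noteq> L3" "x \<in> L1" "x \<in> L2"
  shows "x \<notin> L3"
proof -
  have "\<forall>L1\<in>\<L>. \<forall>L2\<in>\<L>. \<forall>L3\<in>\<L>.
      L1 \<noteq> L2 \<and> L1 \<noteq> L3 \<and> L2 \<noteq> L3 \<longrightarrow> L1 \<inter> L2 \<inter> L3 = {}"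
    using assms(1) unfolding bounded_general_position_def by (elim conjE) assumption
  then have "L1 \<inter> L2 \<inter> L3 = {}" using assms(2-7) by simp
  then show ?thesis using assms(8,9) by blast
qed

lemma G_verticesI:
  "L1 \<in> \<L> \<Longrightarrow> L2 \<in> \<L> \<Longrightarrow> L1 \<noteq> L2 \<Longrightarrow> x \<in> L1 \<Longrightarrow> x \<in> L2 \<Longrightarrow> x \<in> G_vertices \<L>"
  unfolding G_vertices_def by blast

lemma finite_G_vertices:
  assumes "bounded_general_position \<L>"
  shows "finite (G_vertices \<L>)"
proof -
  have "finite (L1 \<inter> L2)" if "L1 \<in> \<L>" "L2 \<in> \<L>" "L1 \<noteq> L2" for L1 L2
  proof (cases "L1 \<inter> L2 = {}")
    case False
    then obtain x where x: "x \<in> L1 \<inter> L2" by blast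
    have "L1 \<inter> L2 \<subseteq> {x}"
      using lines_meet_at_most_once[OF _ _ that(3) x] that(1,2)
        bounded_general_position_lines[OF assms] by blast
    then show ?thesis using finite_subset by blast
  qed simp
  moreover have "finite \<L>" using assms by (simp add: bounded_general_position_def)
  moreover have "G_vertices \<L> = (\<Union>L1\<in>\<L>. \<Union>L2\<in>\<L> - {L1}. L1 \<inter> L2)"
    unfolding G_vertices_def by blast
  ultimately show ?thesis by (simp only:) (intro finite_UN_I; auto)
qed

lemma arr_polygon_iff:
  assumes "bounded_general_position \<L>"
  shows "arr_polygon \<L> V \<longleftrightarrow>
    polytope V \<and> aff_dim V = 2 \<and> (\<forall>F\<in>polygon_sides V. affine hull F \<in> \<L>)"
proof
  assume "arr_polygon \<L> V"
  then obtain lf where V: "polytope V" "aff_dim V = 2"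
    and lf: "\<And>F. F \<in> polygon_sides V \<Longrightarrow> lf F \<in> \<L> \<and> F \<subseteq> lf F"
    unfolding arr_polygon_def by blast
  have "affine hull F = lf F" if F: "F \<in> polygon_sides V" for F
  proof (rule affine_hull_eq_line)
    show "is_line (lf F)" using lf[OF F] bounded_general_position_lines[OF assms] by blast
    show "F \<subseteq> lf F" using lf[OF F] by blast
    show "aff_dim F = 1" using F by (simp add: polygon_sides_def)
  qed
  then show "polytope V \<and> aff_dim V = 2 \<and> (\<forall>F\<in>polygon_sides V. affine hull F \<in> \<L>)"
    using V lf by auto
next
  assume V: "polytope V \<and> aff_dim V = 2 \<and> (\<forall>F\<in>polygon_sides V. affine hull F \<in> \<L>)"
  have inj: "inj_on (\<lambda>F. affine hull F) (polygon_sides V)"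
    using inj_on_affine_hull_sides polytope_imp_convex V by blast
  have "x \<in> G_vertices \<L>" if vertex: "{x} face_of V" for x
  proof -
    have "polyhedron V" "aff_dim V = 2" using V polytope_imp_polyhedron by auto
    then obtain F F' where F: "F \<in> polygon_sides V" "F' \<in> polygon_sides V" "F \<noteq> F'"
      and x: "x \<in> F" "x \<in> F'"
      by (rule polygon_vertex_in_two_sides[OF _ _ vertex])
    have "affine hull F \<noteq> affine hull F'" using inj_onD[OF inj] F by blast
    then show ?thesis
      using G_verticesI[of "affine hull F" \<L> "affine hull F'" x] V F x hull_inc by metis
  qed
  then have "polygon_vertices V \<subseteq> G_vertices \<L>" unfolding polygon_vertices_def by blast
  then show "arr_polygon \<L> V"
    unfolding arr_polygon_def
    by (intro conjI exI[of _ "\<lambda>F. affine hull F"]) (use V inj in \<open>auto simp: hull_subset\<close>)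
qed

definition counted_region :: "(real^2) set \<Rightarrow> (real^2) set" where
  "counted_region V = interior V \<union> \<Union>(rel_interior ` polygon_sides V)"

lemma vertex_number_eq_card_counted_region:
  "vertex_number \<L> V = card (G_vertices \<L> \<inter> counted_region V)"
  unfolding vertex_number_def counted_region_def by (rule arg_cong[where f = card]) blast

lemma line_through_side_meets_interior:
  fixes V :: "(real^2) set"
  assumes "convex V" "aff_dim V = 2" "F \<in> polygon_sides V" "is_line l" "l \<noteq> affine hull F"
    "p \<in> rel_interior F" "p \<in> l"
  shows "l \<inter> interior V \<noteq> {}"
proof
  assume "l \<inter> interior V = {}"
  moreover have "connected (interior V)" by (simp add: assms(1) convex_connected)
  ultimately obtain a b where ab: "a \<noteq> 0" "l = {x. a \<bullet> x = b}" "\<forall>x\<in>interior V. a \<bullet> x < b"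
    using connected_disjoint_line_in_halfplane assms(4) by (metis inf_commute)
  have "closure (interior V) \<subseteq> {x. a \<bullet> x \<le> b}"
    using ab(3) by (intro closure_minimal) (auto simp: closed_halfspace_le)
  then have "V \<subseteq> {x. a \<bullet> x \<le> b}"
    using convex_closure_interior[OF assms(1) interior_nonempty_polygon[OF assms(1,2)]]
      closure_subset by blast
  moreover have "F face_of V" using assms(3) by (simp add: polygon_sides_def)
  ultimately have "convex F" "F \<subseteq> {x. a \<bullet> x \<le> b}"
    using face_of_imp_convex face_of_imp_subset by blast+
  then have "F \<subseteq> l"
    using subset_supporting_hyperplane_rel_interior[OF _ _ assms(6)] ab(2) assms(7) by blast
  then have "affine hull F = l"
    using affine_hull_eq_line[OF assms(4)] assms(3) by (simp add: polygon_sides_def)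
  then show False using assms(5) by simp
qed

lemma polygon_vertex_off_crossing_line:
  assumes "bounded_general_position \<L>" "arr_polygon \<L> V" "{x} face_of V"
    "l \<in> \<L>" "l \<inter> interior V \<noteq> {}"
  shows "x \<notin> l"
proof
  assume "x \<in> l"
  have V: "polytope V" "aff_dim V = 2" and hulls: "\<forall>F\<in>polygon_sides V. affine hull F \<in> \<L>"
    using assms(2) arr_polygon_iff[OF assms(1)] by auto
  then have "polyhedron V" using polytope_imp_polyhedron by blast
  then obtain F F' where F: "F \<in> polygon_sides V" "F' \<in> polygon_sides V" "F \<noteq> F'"
    and x: "x \<in> F" "x \<in> F'"
    by (rule polygon_vertex_in_two_sides[OF _ V(2) assms(3)])
  have "affine hull F \<noteq> affine hull F'"
    using inj_onD[OF inj_on_affine_hull_sides[OF polytope_imp_convex[OF V(1)]]] F by blast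
  moreover have "affine hull G \<noteq> l" if "G \<in> polygon_sides V" for G
    using affine_hull_side_disjoint_interior[OF polytope_imp_convex[OF V(1)] V(2) that] assms(5)
    by blast
  ultimately show False
    using bounded_general_position_no_triple_point[OF assms(1), of "affine hull F" "affine hull F'" l x]
      hulls F x \<open>x \<in> l\<close> assms(4) hull_inc by metis
qed

lemma crossing_line_exists:
  assumes "bounded_general_position \<L>" "arr_polygon \<L> V" "vertex_number \<L> V > 0"
  obtains l where "l \<in> \<L>" "l \<inter> interior V \<noteq> {}"
proof -
  have V: "polytope V" "aff_dim V = 2" using assms(2) arr_polygon_iff[OF assms(1)] by auto
  obtain p where p: "p \<in> G_vertices \<L>" "p \<in> counted_region V"
    using assms(3) card_gt_0_iff vertex_number_eq_card_counted_region by (metis disjoint_iff)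
  then obtain L1 L2 where L: "L1 \<in> \<L>" "L2 \<in> \<L>" "L1 \<noteq> L2" "p \<in> L1" "p \<in> L2"
    unfolding G_vertices_def by blast
  from p(2) consider "p \<in> interior V" | F where "F \<in> polygon_sides V" "p \<in> rel_interior F"
    unfolding counted_region_def by blast
  then show ?thesis
  proof cases
    case 1
    then show ?thesis using that[OF L(1)] L(4) by blast
  next
    case (2 F)
    then obtain l where "l \<in> \<L>" "l \<noteq> affine hull F" "p \<in> l" using L by metis
    moreover from this have "l \<inter> interior V \<noteq> {}"
      using line_through_side_meets_interior[OF polytope_imp_convex[OF V(1)] V(2) 2(1) _ _ 2(2)]
        bounded_general_position_lines[OF assms(1)] by blast
    ultimately show ?thesis using that by blast
  qed
qed

lemma edge_side_disjoint_crossing_line: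
  assumes "bounded_general_position \<L>" "arr_polygon \<L> V" "e \<in> G_edges \<L>"
    "e \<in> polygon_sides V" "l \<in> \<L>" "l \<inter> interior V \<noteq> {}"
  shows "e \<inter> l = {}"
proof (rule ccontr)
  assume "e \<inter> l \<noteq> {}"
  then obtain x where x: "x \<in> e" "x \<in> l" by blast
  have V: "polytope V" "aff_dim V = 2" and hulls: "\<forall>F\<in>polygon_sides V. affine hull F \<in> \<L>"
    using assms(2) arr_polygon_iff[OF assms(1)] by auto
  have "affine hull e \<noteq> l"
    using affine_hull_side_disjoint_interior[OF polytope_imp_convex[OF V(1)] V(2) assms(4)] assms(6)
    by blast
  then have "x \<in> G_vertices \<L>"
    using G_verticesI[of "affine hull e" \<L> l x] hulls assms(4,5) x hull_inc by metis
  moreover obtain a b where e: "e = closed_segment a b"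
    and no_vertex: "G_vertices \<L> \<inter> open_segment a b = {}"
    using assms(3) unfolding G_edges_def by blast
  ultimately have "x = a \<or> x = b" using x(1) unfolding open_segment_def by blast
  then have "{x} face_of e" using e by (auto simp: face_of_singleton extreme_point_of_segment)
  then have "{x} face_of V"
    using assms(4) face_of_trans by (auto simp: polygon_sides_def)
  then show False using polygon_vertex_off_crossing_line[OF assms(1,2) _ assms(5,6)] x(2) by blast
qed

lemma crossing_line_exits_through_side:
  assumes "bounded_general_position \<L>" "arr_polygon \<L> V" "l \<in> \<L>" "l \<inter> interior V \<noteq> {}"
  obtains q where "q \<in> G_vertices \<L>" "q \<in> l" "q \<in> counted_region V" "q \<notin> interior V"
proof -
  have V: "polytope V" "aff_dim V = 2" and hulls: "\<forall>F\<in>polygon_sides V. affine hull F \<in> \<L>"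
    using assms(2) arr_polygon_iff[OF assms(1)] by auto
  have line: "is_line l" using bounded_general_position_lines[OF assms(1,3)] .
  have "l - V \<noteq> {}"
    using not_bounded_line[OF line] bounded_subset[OF polytope_imp_bounded[OF V(1)]] by blast
  moreover have "l \<inter> V \<noteq> {}" using assms(4) interior_subset by blast
  moreover have "connected l" by (simp add: affine_line[OF line] affine_imp_convex convex_connected)
  ultimately obtain q where q: "q \<in> l" "q \<in> frontier V" using connected_Int_frontier by blast
  then have "q \<notin> interior V" by (simp add: frontier_def)
  obtain F where F: "F \<in> polygon_sides V" "q \<in> F" by (rule frontier_polygon_in_side[OF V q(2)])
  have "affine hull F \<noteq> l"
    using affine_hull_side_disjoint_interior[OF polytope_imp_convex[OF V(1)] V(2) F(1)] assms(4)
    by blast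
  then have "q \<in> G_vertices \<L>"
    using G_verticesI[of "affine hull F" \<L> l q] hulls assms(3) F q(1) hull_inc by metis
  moreover have "\<not> {q} face_of V"
    using polygon_vertex_off_crossing_line[OF assms(1,2) _ assms(3,4)] q(1) by blast
  then have "q \<in> rel_interior F" using side_endpoint_is_vertex[OF V(1) F] by blast
  ultimately show ?thesis
    using that q(1) \<open>q \<notin> interior V\<close> F(1) unfolding counted_region_def by blast
qed

section \<open>Cutting a polygon along a crossing line\<close>

locale polygon_cut =
  fixes V :: "(real^2) set" and u :: "real^2" and c :: real
  assumes polytope_V: "polytope V" and aff_dim_V: "aff_dim V = 2" and u_nonzero: "u \<noteq> 0"
    and line_crosses: "{x. u \<bullet> x = c} \<inter> interior V \<noteq> {}"
begin

abbreviation cut :: "(real^2) set" where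
  "cut \<equiv> V \<inter> {x. u \<bullet> x \<le> c}"

lemma convex_V: "convex V"
  using polytope_V polytope_imp_convex by blast

lemma interior_cut: "interior cut = interior V \<inter> {x. u \<bullet> x < c}"
  using u_nonzero by simp

lemma interior_cut_nonempty: "interior cut \<noteq> {}"
proof -
  obtain z where z: "u \<bullet> z = c" "z \<in> interior V" using line_crosses by blast
  then obtain r where "r > 0" and ball: "ball z r \<subseteq> interior V"
    using open_contains_ball open_interior by blast
  define y where "y = z - (r / (2 * norm u)) *\<^sub>R u"
  have "dist z y = r / 2" using u_nonzero \<open>r > 0\<close> by (simp add: y_def dist_norm)
  then have "y \<in> interior V" using ball \<open>r > 0\<close> by auto
  moreover have "u \<bullet> y < c"
    using z(1) \<open>r > 0\<close> u_nonzero by (simp add: y_def inner_diff_right power2_norm_eq_inner[symmetric])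
  ultimately show ?thesis using interior_cut by blast
qed

lemma aff_dim_cut: "aff_dim cut = 2"
  using aff_dim_nonempty_interior[OF interior_cut_nonempty] by simp

lemma polytope_cut: "polytope cut"
  by (rule polytope_Int_polyhedron[OF polytope_V polyhedron_halfspace_le])

lemma rel_interior_on_line: "rel_interior (V \<inter> {x. u \<bullet> x = c}) = interior V \<inter> {x. u \<bullet> x = c}"
proof -
  have "interior V \<inter> {x. u \<bullet> x = c} \<noteq> {}" using line_crosses by blast
  then show ?thesis by (rule rel_interior_convex_Int_affine[OF convex_V affine_hyperplane])
qed

lemma side_of_cut:
  assumes "G \<in> polygon_sides cut"
  shows "affine hull G = {x. u \<bullet> x = c} \<or>
    (\<exists>F\<in>polygon_sides V. G \<subseteq> F \<and> affine hull G = affine hull F)"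
proof -
  have G: "G face_of cut" "aff_dim G = 1" using assms by (auto simp: polygon_sides_def)
  then have "G \<noteq> {}" by auto
  then obtain x where x: "x \<in> rel_interior G"
    using rel_interior_eq_empty face_of_imp_convex[OF G(1)] by blast
  have GW: "G \<subseteq> cut" using G(1) face_of_imp_subset by blast
  then have xW: "x \<in> cut" using x rel_interior_subset by blast
  have "G \<noteq> cut" using G(2) aff_dim_cut by auto
  then have "G \<subseteq> frontier cut"
    using face_of_subset_rel_frontier[OF G(1)] rel_frontier_nonempty_interior[OF interior_cut_nonempty]
    by simp
  then have x_not_int: "x \<notin> interior cut" using x rel_interior_subset by (auto simp: frontier_def)
  show ?thesis
  proof (cases "u \<bullet> x = c")
    case True
    have "G \<subseteq> {x. u \<bullet> x \<le> c}" using GW by blast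
    then show ?thesis
      using affine_hull_eq_supporting_line[OF face_of_imp_convex[OF G(1)] G(2) u_nonzero _ x True]
      by blast
  next
    case False
    then have "u \<bullet> x < c" using xW by auto
    then have "x \<notin> interior V" using x_not_int interior_cut by blast
    moreover have "x \<in> V" using xW by blast
    ultimately have "x \<in> frontier V" using closure_subset by (auto simp: frontier_def)
    then obtain F where "F \<in> polygon_sides V" "G \<subseteq> F" "affine hull G = affine hull F"
      by (rule face_in_side_through_frontier_point[OF polytope_V aff_dim_V Int_lower1 G x])
    then show ?thesis by blast
  qed
qed

lemma counted_side_of_cut_on_line:
  assumes "G \<in> polygon_sides cut" "y \<in> rel_interior G" "u \<bullet> y = c"
  shows "y \<in> interior V"
proof -
  have G: "G face_of cut" "aff_dim G = 1" using assms(1) by (auto simp: polygon_sides_def)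
  have "G \<subseteq> {x. u \<bullet> x \<le> c}" using face_of_imp_subset[OF G(1)] by blast
  then have "affine hull G = {x. u \<bullet> x = c}"
    using affine_hull_eq_supporting_line[OF face_of_imp_convex[OF G(1)] G(2) u_nonzero _ assms(2,3)]
    by blast
  have "G = affine hull G \<inter> cut"
    by (rule face_of_imp_eq_affine_Int[OF _ G(1)]) (simp add: convex_V convex_Int convex_halfspace_le)
  also have "\<dots> = V \<inter> {x. u \<bullet> x = c}" using \<open>affine hull G = {x. u \<bullet> x = c}\<close> by auto
  finally have "G = V \<inter> {x. u \<bullet> x = c}" .
  then show ?thesis using assms(2) rel_interior_on_line by blast
qed

lemma counted_region_cut_subset: "counted_region cut \<subseteq> counted_region V"
proof
  fix y assume "y \<in> counted_region cut"
  then consider "y \<in> interior cut" | G where "G \<in> polygon_sides cut" "y \<in> rel_interior G"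
    unfolding counted_region_def by blast
  then show "y \<in> counted_region V"
  proof cases
    case 1
    then have "y \<in> interior V" using interior_cut by simp
    then show ?thesis by (simp add: counted_region_def)
  next
    case (2 G)
    show ?thesis
    proof (cases "u \<bullet> y = c")
      case True
      then have "y \<in> interior V" by (rule counted_side_of_cut_on_line[OF 2])
      then show ?thesis by (simp add: counted_region_def)
    next
      case False
      have "y \<in> G" using 2(2) rel_interior_subset by blast
      then have "y \<in> affine hull G" by (rule hull_inc)
      then have "affine hull G \<noteq> {x. u \<bullet> x = c}" using False by auto
      then obtain F where F: "F \<in> polygon_sides V" "G \<subseteq> F" "affine hull G = affine hull F"
        using side_of_cut[OF 2(1)] by blast
      then have "y \<in> rel_interior F" using subset_rel_interior[OF F(2,3)] 2(2) by blast
      then show ?thesis using F(1) unfolding counted_region_def by blast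
    qed
  qed
qed

lemma counted_region_cut_on_line: "counted_region cut \<inter> {x. u \<bullet> x = c} \<subseteq> interior V"
proof
  fix y assume y: "y \<in> counted_region cut \<inter> {x. u \<bullet> x = c}"
  then have "y \<notin> interior cut" using interior_cut by simp
  then obtain G where "G \<in> polygon_sides cut" "y \<in> rel_interior G"
    using y unfolding counted_region_def by blast
  then show "y \<in> interior V" using counted_side_of_cut_on_line y by blast
qed

lemma card_sides_cut_le: "card (polygon_sides cut) \<le> card (polygon_sides V) + 1"
proof -
  have fin: "finite (polygon_sides V)"
    using finite_polytope_faces[OF polytope_V]
    by (rule finite_subset[rotated]) (auto simp: polygon_sides_def)
  have "(\<lambda>G. affine hull G) ` polygon_sides cut \<subseteq>
      insert {x. u \<bullet> x = c} ((\<lambda>F. affine hull F) ` polygon_sides V)"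
    using side_of_cut by blast
  then have "card ((\<lambda>G. affine hull G) ` polygon_sides cut) \<le>
      card (insert {x. u \<bullet> x = c} ((\<lambda>F. affine hull F) ` polygon_sides V))"
    by (rule card_mono[rotated]) (simp add: fin)
  also have "\<dots> \<le> card ((\<lambda>F. affine hull F) ` polygon_sides V) + 1"
    by (simp add: card_insert_if fin)
  also have "\<dots> \<le> card (polygon_sides V) + 1" using card_image_le[OF fin] by simp
  finally show ?thesis
    using card_image[OF inj_on_affine_hull_sides[OF polytope_imp_convex[OF polytope_cut]]] by simp
qed

lemma arr_polygon_cut:
  assumes "bounded_general_position \<L>" "arr_polygon \<L> V" "{x. u \<bullet> x = c} \<in> \<L>"
  shows "arr_polygon \<L> cut"
proof -
  have "\<forall>F\<in>polygon_sides V. affine hull F \<in> \<L>" using assms(2) arr_polygon_iff[OF assms(1)] by blast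
  then have "affine hull G \<in> \<L>" if "G \<in> polygon_sides cut" for G
    using side_of_cut[OF that] assms(3) by auto
  then show ?thesis by (simp add: arr_polygon_iff[OF assms(1)] polytope_cut aff_dim_cut)
qed

lemma vertex_number_cut_less:
  assumes "bounded_general_position \<L>" "arr_polygon \<L> V" "{x. u \<bullet> x = c} \<in> \<L>"
  shows "vertex_number \<L> cut < vertex_number \<L> V"
proof -
  obtain q where q: "q \<in> G_vertices \<L>" "u \<bullet> q = c" "q \<in> counted_region V" "q \<notin> interior V"
    using crossing_line_exits_through_side[OF assms line_crosses] by blast
  have "G_vertices \<L> \<inter> counted_region cut \<subseteq> G_vertices \<L> \<inter> counted_region V - {q}"
    using counted_region_cut_subset counted_region_cut_on_line q(2,4) by blast
  also have "\<dots> \<subset> G_vertices \<L> \<inter> counted_region V" using q(1,3) by blast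
  finally show ?thesis
    unfolding vertex_number_eq_card_counted_region
    by (rule psubset_card_mono[OF finite_Int[OF disjI1 [OF finite_G_vertices[OF assms(1)]]]])
qed

end

theorem lemma1p8:
  fixes \<L> :: "(real^2) set set" and V e :: "(real^2) set" and m k :: nat
  assumes "bounded_general_position \<L>"
    and "arr_polygon \<L> V"
    and "card (polygon_sides V) = m"
    and "\<not> alcove \<L> V"
    and "vertex_number \<L> V = k" and "k > 0"
    and "e \<in> G_edges \<L>" and "e \<in> polygon_sides V"
  shows "\<exists>W. arr_polygon \<L> W \<and> card (polygon_sides W) \<le> m + 1 \<and>
             e \<in> polygon_sides W \<and> vertex_number \<L> W < k"
proof -
  have V: "polytope V" "aff_dim V = 2" using assms(2) arr_polygon_iff[OF assms(1)] by auto
  obtain l where l: "l \<in> \<L>" "l \<inter> interior V \<noteq> {}"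
    using crossing_line_exists[OF assms(1,2)] assms(5,6) by blast
  have "e face_of V" using assms(8) by (simp add: polygon_sides_def)
  then have "connected e" by (simp add: face_of_imp_convex convex_connected)
  moreover have "e \<inter> l = {}" by (rule edge_side_disjoint_crossing_line[OF assms(1,2,7,8) l])
  ultimately obtain u c where u: "u \<noteq> 0" and l_eq: "l = {x. u \<bullet> x = c}"
    and below: "\<forall>x\<in>e. u \<bullet> x < c"
    by (rule connected_disjoint_line_in_halfplane[OF _ bounded_general_position_lines[OF assms(1) l(1)]])
  interpret polygon_cut V u c
    using V u l(2) l_eq by unfold_locales auto
  have "e \<subseteq> cut" using face_of_imp_subset[OF \<open>e face_of V\<close>] below by fastforce
  then have "e face_of cut" using face_of_subset[OF \<open>e face_of V\<close> _ Int_lower1] by blast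
  then have "e \<in> polygon_sides cut" using assms(8) by (simp add: polygon_sides_def)
  moreover have "arr_polygon \<L> cut" using arr_polygon_cut[OF assms(1,2)] l(1) l_eq by simp
  moreover have "card (polygon_sides cut) \<le> m + 1" using card_sides_cut_le assms(3) by simp
  moreover have "vertex_number \<L> cut < k"
    using vertex_number_cut_less[OF assms(1,2)] l(1) l_eq assms(5) by simp
  ultimately show ?thesis by blast
qed

end
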